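(* Let $A$ be a finite simple undirected graph, let $v\neq w$ be vertices of $A$, and let $d(v),d(w)$ denote the degrees of $v$ and $w$ in $A$. (i) If $\{v,w\}\notin E(A)$ and $A'$ is obtained from $A$ by inserting the edge $\{v,w\}$, then $|E(W(A'))\setminus E(W(A))|\le d(v)+d(w)$ and $|E(W(A))\setminus E(W(A'))|\le \min(d(v),d(w))$. (ii) If $\{v,w\}\in E(A)$ and $A'$ is obtained from $A$ by removing the edge $\{v,w\}$, then $|E(W(A'))\setminus E(W(A))|\le \min(d(v),d(w))$ and $|E(W(A))\setminus E(W(A'))|\le d(v)+d(w)$.
   Context: A wedge in a graph $G=(V,E)$ is a triple of nodes $u,v,w$ with $\{u,v\},\{v,w\}\in E$ and $\{u,w\}\notin E$, denoted $(v,\{u,w\})$. The wedge graph $W(G)$ has one vertex $n_{uv}$ for each edge $\{u,v\}\in E$, and an edge $\{n_{uv},n_{vw}\}$ for each wedge $(v,\{u,w\})$ of $G$. Edges of wedge graphs are compared via these names, i.e. $n_{uv}$ denotes the same vertex in $W(A)$ and $W(A')$ whenever $\{u,v\}$ is an edge of both graphs. *)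

theory Defs
  imports Main
begin

definition simple_graph :: "'a set \<Rightarrow> 'a set set \<Rightarrow> bool" where
  "simple_graph V E \<longleftrightarrow> finite V \<and> (\<forall>e\<in>E. e \<subseteq> V \<and> card e = 2)"

definition degree :: "'a set \<Rightarrow> 'a set set \<Rightarrow> 'a \<Rightarrow> nat" where
  "degree V E v = card {u \<in> V. {u, v} \<in> E}"

text \<open>Edge set of the wedge graph W(G): vertices of W(G) are the edges of G
  (n_uv is represented by the set {u,v}); each wedge (v,{u,w}) gives the edge {n_uv, n_vw}.\<close>
definition wedge_edges :: "'a set set \<Rightarrow> 'a set set set" where
  "wedge_edges E = {{{u, v}, {v, w}} | u v w.
      {u, v} \<in> E \<and> {v, w} \<in> E \<and> u \<noteq> w \<and> {u, w} \<notin> E}"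

end

(* A wedge gained by inserting the edge {v, w} must contain n_vw, so it is determined by its other
   node, an edge at v or at w: at most d(v) + d(w) possibilities. A wedge lost is one that {v, w}
   closes into a triangle, i.e. n_vc n_cw for a common neighbour c: at most min(d(v), d(w))
   possibilities. Removing {v, w} from E is inserting it into E - {{v, w}}, whose neighbourhoods lie
   inside those of E, so both counts are done for an arbitrary subgraph G of E. *)
theory Submission
  imports Defs
begin

lemma wedge_edgesI:
  "{u, v} \<in> E \<Longrightarrow> {v, w} \<in> E \<Longrightarrow> u \<noteq> w \<Longrightarrow> {u, w} \<notin> E \<Longrightarrow> {{u, v}, {v, w}} \<in> wedge_edges E"
  unfolding wedge_edges_def by blast

lemma wedge_edgesE:
  assumes "X \<in> wedge_edges E"
  obtains u v w where "X = {{u, v}, {v, w}}" "{u, v} \<in> E" "{v, w} \<in> E" "u \<noteq> w" "{u, w} \<notin> E"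
  using assms unfolding wedge_edges_def by blast

lemma wedge_edges_insert_diff_subset:
  "wedge_edges (insert {v, w} G) - wedge_edges G
     \<subseteq> (\<lambda>b. {{v, w}, {v, b}}) ` {b. {v, b} \<in> G} \<union> (\<lambda>b. {{v, w}, {w, b}}) ` {b. {w, b} \<in> G}"
proof
  fix X assume X: "X \<in> wedge_edges (insert {v, w} G) - wedge_edges G"
  then have "X \<in> wedge_edges (insert {v, w} G)" by simp
  then obtain a c b where X_eq: "X = {{a, c}, {c, b}}" and ac: "{a, c} \<in> insert {v, w} G"
    and cb: "{c, b} \<in> insert {v, w} G" and "a \<noteq> b" and ab: "{a, b} \<notin> insert {v, w} G"
    by (rule wedge_edgesE)
  have "{a, c} \<noteq> {c, b}" using \<open>a \<noteq> b\<close> by (auto simp: doubleton_eq_iff)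
  moreover have "\<not> ({a, c} \<in> G \<and> {c, b} \<in> G)"
    using X X_eq ab \<open>a \<noteq> b\<close> wedge_edgesI[of a c G b] by blast
  ultimately consider "{a, c} = {v, w}" "{c, b} \<in> G" | "{c, b} = {v, w}" "{c, a} \<in> G"
    using ac cb by (auto simp: insert_commute)
  then show "X \<in> (\<lambda>b. {{v, w}, {v, b}}) ` {b. {v, b} \<in> G} \<union> (\<lambda>b. {{v, w}, {w, b}}) ` {b. {w, b} \<in> G}"
  proof cases
    case 1
    then show ?thesis using X_eq by (auto simp: doubleton_eq_iff)
  next
    case 2
    then show ?thesis using X_eq by (auto simp: doubleton_eq_iff insert_commute)
  qed
qed

lemma wedge_edges_diff_insert_subset:
  "wedge_edges G - wedge_edges (insert {v, w} G)
     \<subseteq> (\<lambda>c. {{v, c}, {c, w}}) ` {c. {v, c} \<in> G \<and> {c, w} \<in> G}"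
proof
  fix X assume X: "X \<in> wedge_edges G - wedge_edges (insert {v, w} G)"
  then have "X \<in> wedge_edges G" by simp
  then obtain a c b where X_eq: "X = {{a, c}, {c, b}}" and "{a, c} \<in> G" "{c, b} \<in> G" "a \<noteq> b"
    "{a, b} \<notin> G"
    by (rule wedge_edgesE)
  moreover from this X have "{a, b} = {v, w}" using wedge_edgesI[of a c "insert {v, w} G" b] by blast
  ultimately show "X \<in> (\<lambda>c. {{v, c}, {c, w}}) ` {c. {v, c} \<in> G \<and> {c, w} \<in> G}"
    by (auto simp: doubleton_eq_iff insert_commute)
qed

lemma card_le_degree:
  assumes "simple_graph V E" and "X \<subseteq> f ` N" and "N \<subseteq> {b. {v, b} \<in> E}"
  shows "card X \<le> degree V E v"
proof -
  have N: "N \<subseteq> {u \<in> V. {u, v} \<in> E}"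
  proof
    fix b assume "b \<in> N"
    then have "{v, b} \<in> E" using assms(3) by blast
    then show "b \<in> {u \<in> V. {u, v} \<in> E}"
      using assms(1) by (auto simp: simple_graph_def insert_commute)
  qed
  have fin: "finite {u \<in> V. {u, v} \<in> E}"
    using assms(1) by (simp add: simple_graph_def)
  then have "card X \<le> card (f ` N)"
    using assms(2) N by (meson card_mono finite_imageI finite_subset)
  also have "\<dots> \<le> card N"
    using fin N by (meson card_image_le finite_subset)
  also have "\<dots> \<le> degree V E v"
    unfolding degree_def using fin N by (rule card_mono)
  finally show ?thesis .
qed

lemma card_wedge_edges_insert_diff_le:
  assumes "simple_graph V E" and "G \<subseteq> E"
  shows "card (wedge_edges (insert {v, w} G) - wedge_edges G) \<le> degree V E v + degree V E w"
proof -
  let ?X = "wedge_edges (insert {v, w} G) - wedge_edges G"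
  let ?at_v = "(\<lambda>b. {{v, w}, {v, b}}) ` {b. {v, b} \<in> G}"
  let ?at_w = "(\<lambda>b. {{v, w}, {w, b}}) ` {b. {w, b} \<in> G}"
  have "?X = (?X \<inter> ?at_v) \<union> (?X \<inter> ?at_w)"
    using wedge_edges_insert_diff_subset[of v w G] by blast
  then have "card ?X \<le> card (?X \<inter> ?at_v) + card (?X \<inter> ?at_w)"
    by (metis card_Un_le)
  also have "\<dots> \<le> degree V E v + degree V E w"
  proof (rule add_mono)
    show "card (?X \<inter> ?at_v) \<le> degree V E v"
      by (rule card_le_degree[OF assms(1) Int_lower2]) (use assms(2) in auto)
    show "card (?X \<inter> ?at_w) \<le> degree V E w"
      by (rule card_le_degree[OF assms(1) Int_lower2]) (use assms(2) in auto)
  qed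
  finally show ?thesis .
qed

lemma card_wedge_edges_diff_insert_le:
  assumes "simple_graph V E" and "G \<subseteq> E"
  shows "card (wedge_edges G - wedge_edges (insert {v, w} G)) \<le> min (degree V E v) (degree V E w)"
proof -
  let ?X = "wedge_edges G - wedge_edges (insert {v, w} G)"
  let ?C = "{c. {v, c} \<in> G \<and> {c, w} \<in> G}"
  have X: "?X \<subseteq> (\<lambda>c. {{v, c}, {c, w}}) ` ?C"
    by (rule wedge_edges_diff_insert_subset)
  have C_v: "?C \<subseteq> {b. {v, b} \<in> E}" and C_w: "?C \<subseteq> {b. {w, b} \<in> E}"
    using assms(2) by (auto simp: insert_commute)
  show ?thesis
    using card_le_degree[OF assms(1) X C_v] card_le_degree[OF assms(1) X C_w] by simp
qed

theorem lemma2: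
  fixes V :: "'a set" and E :: "'a set set" and v w :: 'a
  assumes "simple_graph V E" and "v \<in> V" and "w \<in> V" and "v \<noteq> w"
  shows "({v, w} \<notin> E \<longrightarrow>
            card (wedge_edges (insert {v, w} E) - wedge_edges E) \<le> degree V E v + degree V E w
          \<and> card (wedge_edges E - wedge_edges (insert {v, w} E)) \<le> min (degree V E v) (degree V E w))
       \<and> ({v, w} \<in> E \<longrightarrow>
            card (wedge_edges (E - {{v, w}}) - wedge_edges E) \<le> min (degree V E v) (degree V E w)
          \<and> card (wedge_edges E - wedge_edges (E - {{v, w}})) \<le> degree V E v + degree V E w)"
proof (intro conjI impI)
  show "card (wedge_edges (insert {v, w} E) - wedge_edges E) \<le> degree V E v + degree V E w"
    using card_wedge_edges_insert_diff_le[OF assms(1) order_refl] .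
  show "card (wedge_edges E - wedge_edges (insert {v, w} E)) \<le> min (degree V E v) (degree V E w)"
    using card_wedge_edges_diff_insert_le[OF assms(1) order_refl] .
next
  assume "{v, w} \<in> E"
  then have E_eq: "insert {v, w} (E - {{v, w}}) = E"
    by (rule insert_Diff)
  have sub: "E - {{v, w}} \<subseteq> E"
    by (rule Diff_subset)
  show "card (wedge_edges (E - {{v, w}}) - wedge_edges E) \<le> min (degree V E v) (degree V E w)"
    using card_wedge_edges_diff_insert_le[OF assms(1) sub, of v w]
    unfolding E_eq .
  show "card (wedge_edges E - wedge_edges (E - {{v, w}})) \<le> degree V E v + degree V E w"
    using card_wedge_edges_insert_diff_le[OF assms(1) sub, of v w]
    unfolding E_eq .
qed

end
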